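(* For every integer $1\le m\le D/4$, the Markov chain on $\Sigma_m$ induced by the local automaton gate set $\mathcal G$ is aperiodic: for any $S,S'\in\Sigma_m$ there exists $\ell_{\min}$ such that for every $\ell\ge\ell_{\min}$ there is a sequence of $\ell$ gates $u_1,\dots,u_\ell\in\mathcal G$ with $u_\ell\circ\cdots\circ u_1(S)=S'$.
   Context: Consider $N\ge3$ qubits on a ring (site indices modulo $N$), bitstrings $\mathbf z\in\{0,1\}^N$, $D=2^N$. The gate set is $\mathcal G=\{u_{iab}: i\in\{1,\dots,N\},\ a,b\in\{0,1\}\}$, where $u_{iab}$ is the permutation of $\{0,1\}^N$ that flips bit $i$ if and only if bit $i-1$ equals $a$ and bit $i+1$ equals $b$. $\Sigma_m$ is the set of subsets of $\{0,1\}^N$ of cardinality $m$, with $u(S)=\{u(\mathbf z):\mathbf z\in S\}$. The induced Markov chain has transition matrix $\Gamma_{S,S'}=\frac{1}{|\mathcal G|}\sum_{u\in\mathcal G}\delta_{S',u(S)}$. *)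

theory Defs
  imports Main
begin

definition bitstrings :: "nat \<Rightarrow> bool list set" where
  "bitstrings N = {z. length z = N}"

definition gate :: "nat \<Rightarrow> nat \<Rightarrow> bool \<Rightarrow> bool \<Rightarrow> bool list \<Rightarrow> bool list" where
  "gate N i a b z =
     (if z ! ((i + N - 1) mod N) = a \<and> z ! ((i + 1) mod N) = b
      then z[i := \<not> z ! i] else z)"

definition gate_set :: "nat \<Rightarrow> (bool list \<Rightarrow> bool list) set" where
  "gate_set N = {gate N i a b | i a b. i < N}"

definition Sigma_m :: "nat \<Rightarrow> nat \<Rightarrow> bool list set set" where
  "Sigma_m N m = {S. S \<subseteq> bitstrings N \<and> card S = m}"

definition apply_gates :: "(bool list \<Rightarrow> bool list) list \<Rightarrow> bool list set \<Rightarrow> bool list set" where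
  "apply_gates us S = fold (\<lambda>u T. u ` T) us S"

end

theory Submission
  imports Defs
begin

(* Every gate u_{iab} is a flip of bit i controlled by its two neighbours.  Two identities
   reshape control sets: composing two flips of the same target whose controls differ only
   in the required value of one site drops that site, and the commutator of a flip of t
   controlled by s and K with a flip of s controlled by K' is a flip of t controlled by K
   and K'.  Widening the controls site by site around the ring yields, for every target i
   and every other site k, the flip of i controlled by all sites except i and k.  Products
   of these along a Hamming path flip bit i on exactly two chosen i-edges of the
   hypercube.  (Full control is out of reach: it would be a single transposition, while for
   N >= 4 every gate is an even permutation.)

   If 2|S| < D, some i-edge misses S, so an element of S can be moved to a neighbour
   outside S with the rest of S fixed; this connects any two m-subsets.  Aperiodicity
   follows by routing through a set T of strings with bit 0 equal to 0: the gate u_{1,1,1}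
   fixes T, so it can be inserted any number of times. *)

definition flip :: "nat \<Rightarrow> bool list \<Rightarrow> bool list" where
  "flip i z = z[i := \<not> z ! i]"

lemma length_flip [simp]: "length (flip i z) = length z"
  by (simp add: flip_def)

lemma nth_flip: "flip i z ! k = (if k = i \<and> i < length z then \<not> z ! k else z ! k)"
  by (cases "i < length z") (auto simp: flip_def nth_list_update list_update_beyond)

lemma flip_flip [simp]: "flip i (flip i z) = z"
  by (cases "i < length z") (simp_all add: flip_def list_update_beyond)

lemma flip_commute: "flip s (flip t z) = flip t (flip s z)"
  by (cases "s = t") (auto simp: flip_def nth_list_update list_update_swap)

lemma flip_in_bitstrings [simp]: "flip i z \<in> bitstrings N \<longleftrightarrow> z \<in> bitstrings N"
  by (simp add: bitstrings_def)

lemma finite_bitstrings [simp]: "finite (bitstrings N)"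
  using finite_lists_length_eq[of "UNIV :: bool set" N] by (simp add: bitstrings_def)

lemma card_bitstrings: "card (bitstrings N) = 2 ^ N"
  using card_lists_length_eq[of "UNIV :: bool set" N] by (simp add: bitstrings_def)

definition gate_realizable :: "nat \<Rightarrow> (bool list \<Rightarrow> bool list) \<Rightarrow> bool" where
  "gate_realizable N g \<longleftrightarrow>
     (\<exists>us. set us \<subseteq> gate_set N \<and> (\<forall>z\<in>bitstrings N. fold id us z = g z))"

lemma gate_in_bitstrings: "z \<in> bitstrings N \<Longrightarrow> gate N i a b z \<in> bitstrings N"
  by (simp add: gate_def bitstrings_def)

lemma fold_gates_in_bitstrings:
  "set us \<subseteq> gate_set N \<Longrightarrow> z \<in> bitstrings N \<Longrightarrow> fold id us z \<in> bitstrings N"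
  by (induction us arbitrary: z) (auto simp: gate_set_def gate_in_bitstrings)

lemma gate_realizable_gate: "u \<in> gate_set N \<Longrightarrow> gate_realizable N u"
  unfolding gate_realizable_def by (intro exI[of _ "[u]"]) simp

lemma gate_realizable_id: "gate_realizable N id"
  unfolding gate_realizable_def by (intro exI[of _ "[]"]) simp

lemma gate_realizable_comp:
  assumes "gate_realizable N f" and "gate_realizable N g"
  shows "gate_realizable N (g \<circ> f)"
proof -
  obtain us where us: "set us \<subseteq> gate_set N" "\<forall>z\<in>bitstrings N. fold id us z = f z"
    using assms(1) unfolding gate_realizable_def by blast
  obtain vs where vs: "set vs \<subseteq> gate_set N" "\<forall>z\<in>bitstrings N. fold id vs z = g z"
    using assms(2) unfolding gate_realizable_def by blast
  have "fold id (us @ vs) z = g (f z)" if "z \<in> bitstrings N" for z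
    using us vs fold_gates_in_bitstrings[OF us(1) that] that by simp
  then show ?thesis
    unfolding gate_realizable_def using us(1) vs(1) by (intro exI[of _ "us @ vs"]) auto
qed

lemma gate_realizable_cong:
  "gate_realizable N f \<Longrightarrow> (\<And>z. z \<in> bitstrings N \<Longrightarrow> f z = g z) \<Longrightarrow> gate_realizable N g"
  unfolding gate_realizable_def by metis

definition gate_reachable :: "nat \<Rightarrow> bool list set \<Rightarrow> bool list set \<Rightarrow> bool" where
  "gate_reachable N S T \<longleftrightarrow> (\<exists>us. set us \<subseteq> gate_set N \<and> apply_gates us S = T)"

lemma apply_gates_eq_image: "apply_gates us S = fold id us ` S"
  by (induction us arbitrary: S) (auto simp: apply_gates_def image_image)

lemma apply_gates_append: "apply_gates (us @ vs) S = apply_gates vs (apply_gates us S)"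
  by (simp add: apply_gates_def)

lemma gate_reachable_refl: "gate_reachable N S S"
  unfolding gate_reachable_def by (intro exI[of _ "[]"]) (simp add: apply_gates_def)

lemma gate_reachable_trans:
  "gate_reachable N S T \<Longrightarrow> gate_reachable N T U \<Longrightarrow> gate_reachable N S U"
  unfolding gate_reachable_def by (metis apply_gates_append le_sup_iff set_append)

lemma gate_reachable_image:
  "gate_realizable N g \<Longrightarrow> S \<subseteq> bitstrings N \<Longrightarrow> gate_reachable N S (g ` S)"
  unfolding gate_realizable_def gate_reachable_def apply_gates_eq_image
  by (metis image_cong subsetD)

definition controlled_flip :: "nat \<Rightarrow> (bool list \<Rightarrow> bool) \<Rightarrow> bool list \<Rightarrow> bool list" where
  "controlled_flip t P z = (if P z then flip t z else z)"

definition agrees_on :: "nat set \<Rightarrow> bool list \<Rightarrow> bool list \<Rightarrow> bool" where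
  "agrees_on K x z \<longleftrightarrow> (\<forall>k\<in>K. z ! k = x ! k)"

definition controllable :: "nat \<Rightarrow> nat \<Rightarrow> nat set \<Rightarrow> bool" where
  "controllable N t K \<longleftrightarrow> t < N \<and> t \<notin> K \<and> K \<subseteq> {..<N} \<and>
     (\<forall>x\<in>bitstrings N. gate_realizable N (controlled_flip t (agrees_on K x)))"

lemma agrees_on_flip: "i \<notin> K \<Longrightarrow> agrees_on K x (flip i z) = agrees_on K x z"
  by (auto simp: agrees_on_def nth_flip)

lemma agrees_on_Un: "agrees_on (A \<union> B) x z \<longleftrightarrow> agrees_on A x z \<and> agrees_on B x z"
  by (auto simp: agrees_on_def)

lemma controlled_flip_comp_xor:
  assumes "\<And>z. P (flip t z) = P z"
  shows "controlled_flip t P \<circ> controlled_flip t Q = controlled_flip t (\<lambda>z. P z \<noteq> Q z)"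
  using assms by (auto simp: controlled_flip_def)

lemma agrees_on_flip_xor:
  assumes "k \<in> K" and "k < length x"
  shows "(\<lambda>z. agrees_on K x z \<noteq> agrees_on K (flip k x) z) = agrees_on (K - {k}) x"
proof
  fix z
  show "(agrees_on K x z \<noteq> agrees_on K (flip k x) z) = agrees_on (K - {k}) x z"
    using assms by (cases "z ! k = x ! k") (auto simp: agrees_on_def nth_flip)
qed

lemma controllable_remove:
  assumes "controllable N t K" and "k \<in> K"
  shows "controllable N t (K - {k})"
proof -
  have t: "t \<notin> K" and k: "k < N" using assms by (auto simp: controllable_def)
  have "gate_realizable N (controlled_flip t (agrees_on (K - {k}) x))"
    if x: "x \<in> bitstrings N" for x
  proof -
    have "gate_realizable N
        (controlled_flip t (agrees_on K x) \<circ> controlled_flip t (agrees_on K (flip k x)))"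
      using assms(1) x by (auto simp: controllable_def intro: gate_realizable_comp)
    also have "\<dots> = controlled_flip t (\<lambda>z. agrees_on K x z \<noteq> agrees_on K (flip k x) z)"
      by (rule controlled_flip_comp_xor) (simp add: agrees_on_flip t)
    also have "\<dots> = controlled_flip t (agrees_on (K - {k}) x)"
      using k x assms(2) by (subst agrees_on_flip_xor) (simp_all add: bitstrings_def)
    finally show ?thesis .
  qed
  then show ?thesis using assms(1) by (auto simp: controllable_def)
qed

lemma controllable_subset:
  assumes "controllable N t K" and "K' \<subseteq> K"
  shows "controllable N t K'"
  using assms
proof (induction "card (K - K')" arbitrary: K)
  case 0
  have "finite K" using 0 by (auto simp: controllable_def intro: finite_subset)
  with 0 have "K = K'" by auto
  with 0 show ?case by simp
next
  case (Suc n)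
  have "finite K" using Suc by (auto simp: controllable_def intro: finite_subset)
  moreover obtain k where k: "k \<in> K - K'"
    using Suc.hyps(2) by (metis card.empty ex_in_conv nat.distinct(1))
  ultimately have "card ((K - {k}) - K') = n"
    using Suc.hyps(2) by (simp add: Diff_insert2[symmetric])
  then show ?case using Suc controllable_remove k by blast
qed

text \<open>As \<open>A\<close> toggles the control bit
  \<open>s\<close> of \<open>B\<close> exactly when \<open>K'\<close> matches, \<open>B\<close> fires in exactly one of its two
  applications precisely then.\<close>
lemma controlled_flip_commutator:
  fixes x z :: "bool list"
  assumes "s \<noteq> t" "s \<notin> K" "t \<notin> K" "s \<notin> K'" "t \<notin> K'" "s < length z"
  defines "A \<equiv> controlled_flip s (agrees_on K' x)"
    and "B \<equiv> controlled_flip t (agrees_on (insert s K) x)"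
  shows "B (A (B (A z))) = controlled_flip t (agrees_on (K \<union> K') x) z"
proof -
  have inv: "agrees_on K x (flip s w) = agrees_on K x w"
    "agrees_on K x (flip t w) = agrees_on K x w"
    "agrees_on K' x (flip s w) = agrees_on K' x w"
    "agrees_on K' x (flip t w) = agrees_on K' x w"
    for w using assms(2-5) by (simp_all add: agrees_on_flip)
  have ins: "agrees_on (insert s K) x w \<longleftrightarrow> w ! s = x ! s \<and> agrees_on K x w" for w
    by (auto simp: agrees_on_def)
  have s: "flip s w ! s = (\<not> w ! s)" "flip t w ! s = w ! s" if "s < length w" for w
    using assms(1) that by (auto simp: nth_flip)
  show ?thesis using assms(6)
    by (cases "agrees_on K' x z"; cases "agrees_on K x z"; cases "z ! s = x ! s")
      (simp_all add: A_def B_def controlled_flip_def inv ins s agrees_on_Un flip_commute)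
qed

lemma controllable_Un:
  assumes B: "controllable N t (insert s K)" and A: "controllable N s K'"
    and "t \<notin> K'" and "s \<notin> K"
  shows "controllable N t (K \<union> K')"
proof -
  have "gate_realizable N (controlled_flip t (agrees_on (K \<union> K') x))"
    if x: "x \<in> bitstrings N" for x
  proof -
    let ?A = "controlled_flip s (agrees_on K' x)"
      and ?B = "controlled_flip t (agrees_on (insert s K) x)"
    have "gate_realizable N (?B \<circ> ?A \<circ> ?B \<circ> ?A)"
      using A B x by (simp add: controllable_def gate_realizable_comp)
    then show ?thesis
      by (rule gate_realizable_cong)
        (use assms in \<open>auto simp: controllable_def bitstrings_def
          intro: controlled_flip_commutator\<close>)
  qed
  then show ?thesis using assms by (auto simp: controllable_def)
qed

definition shift :: "nat \<Rightarrow> nat \<Rightarrow> nat \<Rightarrow> nat" where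
  "shift N t k = (t + k) mod N"

lemma shift_lt: "0 < N \<Longrightarrow> shift N t k < N"
  by (simp add: shift_def)

lemma shift_0: "t < N \<Longrightarrow> shift N t 0 = t"
  by (simp add: shift_def)

lemma shift_shift: "shift N (shift N t a) b = shift N t (a + b)"
  by (simp add: shift_def mod_add_left_eq add.assoc)

lemma shift_add_modulus: "shift N t (k + N) = shift N t k"
  by (simp add: shift_def flip: add.assoc)

lemma shift_commute: "shift N t k = shift N k t"
  by (simp add: shift_def add.commute)

lemma inj_on_shift: "t < N \<Longrightarrow> inj_on (shift N t) {..<N}"
  by (rule inj_onI) (simp add: shift_def mod_if split: if_splits)

lemma shift_image: "t < N \<Longrightarrow> shift N t ` {..<N} = {..<N}"
  by (rule endo_inj_surj) (auto simp: shift_lt inj_on_shift)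

lemma shift_neq_self:
  assumes "t < N" and "0 < k" and "k < N"
  shows "shift N t k \<noteq> t"
proof
  assume "shift N t k = t"
  then have "shift N t k = shift N t 0" using assms(1) by (simp add: shift_0)
  then show False using inj_on_shift[OF assms(1)] assms by (auto dest: inj_onD)
qed

lemma controllable_neighbours:
  assumes "3 \<le> N" and "t < N"
  shows "controllable N t {shift N t (N - 1), shift N t 1}"
proof -
  have "(t + N - 1) mod N = shift N t (N - 1)" "(t + 1) mod N = shift N t 1"
    using assms by (simp_all add: shift_def)
  then have gate: "gate N t (x ! shift N t (N - 1)) (x ! shift N t 1)
      = controlled_flip t (agrees_on {shift N t (N - 1), shift N t 1} x)" for x
    by (auto simp: gate_def controlled_flip_def agrees_on_def flip_def)
  have "gate N t a b \<in> gate_set N" for a b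
    using assms by (auto simp: gate_set_def)
  then have "gate_realizable N (controlled_flip t (agrees_on {shift N t (N - 1), shift N t 1} x))"
    for x by (metis gate gate_realizable_gate)
  moreover have "shift N t (N - 1) \<noteq> t" "shift N t 1 \<noteq> t"
    using assms by (simp_all add: shift_neq_self)
  ultimately show ?thesis
    using assms by (simp add: controllable_def shift_lt)
qed

definition control_offsets :: "nat \<Rightarrow> nat \<Rightarrow> nat set" where
  "control_offsets N r = insert (N - 1) (insert (r + 1) {1..<r})"

lemma controllable_control_offsets:
  assumes "3 \<le> N" and "t < N"
  shows "r + 3 \<le> N \<Longrightarrow> controllable N t (shift N t ` control_offsets N r)"
proof (induction r)
  case 0
  have "control_offsets N 0 = {N - 1, 1}" by (auto simp: control_offsets_def)
  then show ?case using controllable_neighbours[OF assms] by simp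
next
  case (Suc r)
  \<comment> \<open>commuting with the neighbour gate of site \<open>r + 1\<close> replaces that control by \<open>r\<close> and \<open>r + 2\<close>\<close>
  let ?s = "shift N t (r + 1)" and ?K = "shift N t ` insert (N - 1) {1..<r}"
    and ?K' = "shift N t ` ({r, r + 2} - {0})"
  have s: "?s < N" using assms by (simp add: shift_lt)
  have "controllable N t (insert ?s ?K)"
    using Suc by (simp add: control_offsets_def insert_commute)
  moreover have "controllable N ?s ?K'"
  proof (rule controllable_subset[OF controllable_neighbours[OF assms(1) s]])
    have "r + 1 + (N - 1) = r + N" using assms by simp
    then have "shift N ?s (N - 1) = shift N t r" by (simp add: shift_shift shift_add_modulus)
    moreover have "shift N ?s 1 = shift N t (r + 2)" by (simp add: shift_shift)
    ultimately show "?K' \<subseteq> {shift N ?s (N - 1), shift N ?s 1}" by auto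
  qed
  moreover have "t \<notin> ?K'"
    using Suc.prems shift_neq_self[OF assms(2), of r] shift_neq_self[OF assms(2), of "r + 2"]
    by (cases "r = 0") auto
  moreover have "?s \<notin> ?K"
  proof -
    have "r + 1 \<notin> insert (N - 1) {1..<r}" "r + 1 < N" "insert (N - 1) {1..<r} \<subseteq> {..<N}"
      using Suc.prems by auto
    then show ?thesis using inj_on_image_mem_iff[OF inj_on_shift[OF assms(2)]] by blast
  qed
  ultimately have "controllable N t (?K \<union> ?K')" by (rule controllable_Un)
  moreover have "insert (N - 1) {1..<r} \<union> ({r, r + 2} - {0}) = control_offsets N (Suc r)"
    by (auto simp: control_offsets_def)
  ultimately show ?case by (metis image_Un)
qed

lemma controllable_all_but_offset:
  assumes "3 \<le> N" and "t < N"
  shows "controllable N t ({..<N} - {t, shift N t (N - 3)})"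
proof -
  have "control_offsets N (N - 3) = {..<N} - {0, N - 3}"
    using assms by (auto simp: control_offsets_def)
  then have "shift N t ` control_offsets N (N - 3) = {..<N} - {t, shift N t (N - 3)}"
    using assms inj_on_image_set_diff[OF inj_on_shift[OF assms(2)]]
    by (simp add: shift_image shift_0)
  then show ?thesis using controllable_control_offsets[OF assms, of "N - 3"] assms by simp
qed

lemma controllable_all_but_two:
  assumes "3 \<le> N" and "t < N" and "s < N" and "s \<noteq> t"
  shows "controllable N t ({..<N} - {t, s})"
proof (cases "s = shift N t (N - 3)")
  case True
  then show ?thesis using controllable_all_but_offset[OF assms(1,2)] by simp
next
  case False
  let ?a = "shift N t (N - 3)" and ?b = "shift N s (N - 3)"
  have "?a \<noteq> ?b"
    using assms inj_on_contraD[OF inj_on_shift[of "N - 3" N], of t s] by (simp add: shift_commute)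
  have "insert s ({..<N} - {t, s, ?a}) = {..<N} - {t, ?a}" using assms False by auto
  then have "controllable N t (insert s ({..<N} - {t, s, ?a}))"
    using controllable_all_but_offset[OF assms(1,2)] by simp
  moreover have "controllable N s ({..<N} - {s, ?b, t})"
    by (rule controllable_subset[OF controllable_all_but_offset[OF assms(1,3)]]) auto
  ultimately have "controllable N t (({..<N} - {t, s, ?a}) \<union> ({..<N} - {s, ?b, t}))"
    by (rule controllable_Un) auto
  moreover have "({..<N} - {t, s, ?a}) \<union> ({..<N} - {s, ?b, t}) = {..<N} - {t, s}"
    using \<open>?a \<noteq> ?b\<close> by auto
  ultimately show ?thesis by simp
qed

lemma flip_path_induct:
  assumes "A \<subseteq> {..<length u}"
    and agree: "\<And>v. length v = length u \<Longrightarrow> \<forall>k\<in>A. v ! k = w ! k \<Longrightarrow> P v"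
    and flip: "\<And>v k. length v = length u \<Longrightarrow> k \<in> A \<Longrightarrow> v ! k \<noteq> w ! k \<Longrightarrow>
      P (flip k v) \<Longrightarrow> P v"
  shows "P u"
proof -
  have "finite A" using assms(1) finite_subset by blast
  have "length v = length u \<Longrightarrow> card {k\<in>A. v ! k \<noteq> w ! k} = n \<Longrightarrow> P v" for v n
  proof (induction n arbitrary: v)
    case 0
    then show ?case using \<open>finite A\<close> by (auto intro: agree)
  next
    case (Suc n)
    have "{k\<in>A. v ! k \<noteq> w ! k} \<noteq> {}"
      using Suc.prems(2) by (metis card.empty nat.distinct(1))
    then obtain k where k: "k \<in> A" "v ! k \<noteq> w ! k" by blast
    have "{j\<in>A. flip k v ! j \<noteq> w ! j} = {j\<in>A. v ! j \<noteq> w ! j} - {k}"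
      using k assms(1) Suc.prems(1) by (auto simp: nth_flip)
    then have "card {j\<in>A. flip k v ! j \<noteq> w ! j} = n"
      using Suc.prems(2) k \<open>finite A\<close> by simp
    then show ?case using Suc k by (auto intro: flip)
  qed
  then show ?thesis by blast
qed

definition on_edge :: "nat \<Rightarrow> nat \<Rightarrow> bool list \<Rightarrow> bool list \<Rightarrow> bool" where
  "on_edge N i u z \<longleftrightarrow> agrees_on ({..<N} - {i}) u z"

lemma on_edge_iff:
  assumes "u \<in> bitstrings N" and "z \<in> bitstrings N" and "i < N"
  shows "on_edge N i u z \<longleftrightarrow> z = u \<or> z = flip i u"
  using assms
  by (cases "z ! i = u ! i")
    (auto simp: on_edge_def agrees_on_def bitstrings_def nth_flip list_eq_iff_nth_eq)

lemma edge_swap_realizable: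
  assumes "3 \<le> N" and "i < N" and "u \<in> bitstrings N" and "w \<in> bitstrings N"
  shows "gate_realizable N (controlled_flip i (\<lambda>z. on_edge N i u z \<noteq> on_edge N i w z))"
proof (rule flip_path_induct[where A = "{..<N} - {i}" and u = u and w = w])
  show "{..<N} - {i} \<subseteq> {..<length u}" using assms(3) by (auto simp: bitstrings_def)
next
  fix v assume "\<forall>k\<in>{..<N} - {i}. v ! k = w ! k"
  then have "controlled_flip i (\<lambda>z. on_edge N i v z \<noteq> on_edge N i w z) = id"
    by (auto simp: on_edge_def agrees_on_def controlled_flip_def)
  then show "gate_realizable N (controlled_flip i (\<lambda>z. on_edge N i v z \<noteq> on_edge N i w z))"
    by (simp add: gate_realizable_id)
next
  fix v k assume v: "length v = length u" and k: "k \<in> {..<N} - {i}"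
    and IH: "gate_realizable N
      (controlled_flip i (\<lambda>z. on_edge N i (flip k v) z \<noteq> on_edge N i w z))"
  let ?C = "({..<N} - {i}) - {k}"
  have v_bits: "v \<in> bitstrings N" using v assms(3) by (simp add: bitstrings_def)
  have "controllable N i ({..<N} - {i, k})"
    using controllable_all_but_two[OF assms(1,2)] k by auto
  then have "gate_realizable N (controlled_flip i (agrees_on ?C v))"
    using v_bits by (simp add: controllable_def set_diff_eq insert_commute Diff_insert2)
  with IH have "gate_realizable N (controlled_flip i (agrees_on ?C v)
      \<circ> controlled_flip i (\<lambda>z. on_edge N i (flip k v) z \<noteq> on_edge N i w z))"
    by (rule gate_realizable_comp)
  also have "\<dots> = controlled_flip i
      (\<lambda>z. agrees_on ?C v z \<noteq> (on_edge N i (flip k v) z \<noteq> on_edge N i w z))"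
    by (rule controlled_flip_comp_xor) (simp add: agrees_on_flip)
  also have "\<dots> = controlled_flip i (\<lambda>z. on_edge N i v z \<noteq> on_edge N i w z)"
  proof -
    have "agrees_on ?C v z = (on_edge N i v z \<noteq> on_edge N i (flip k v) z)" for z
      using agrees_on_flip_xor[of k "{..<N} - {i}" v] k v_bits unfolding on_edge_def
      by (auto simp: bitstrings_def fun_eq_iff)
    then show ?thesis by (metis (full_types))
  qed
  finally show "gate_realizable N (controlled_flip i (\<lambda>z. on_edge N i v z \<noteq> on_edge N i w z))" .
qed

lemma exists_edge_avoiding:
  assumes "S \<subseteq> bitstrings N" and "2 * card S < 2 ^ N"
  obtains r where "r \<in> bitstrings N" "r \<notin> S" "flip i r \<notin> S"
proof -
  have "finite S" using finite_subset[OF assms(1)] by simp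
  have "card (S \<union> flip i ` S) \<le> card S + card (flip i ` S)" by (rule card_Un_le)
  moreover have "card (flip i ` S) \<le> card S" using \<open>finite S\<close> by (rule card_image_le)
  ultimately have "card (S \<union> flip i ` S) < card (bitstrings N)"
    using assms(2) by (simp only: card_bitstrings)
  then have "\<not> bitstrings N \<subseteq> S \<union> flip i ` S"
    using \<open>finite S\<close> card_mono[of "S \<union> flip i ` S" "bitstrings N"] by auto
  then obtain r where r: "r \<in> bitstrings N" "r \<notin> S" "r \<notin> flip i ` S" by blast
  moreover have "flip i r \<notin> S"
  proof
    assume "flip i r \<in> S"
    then have "flip i (flip i r) \<in> flip i ` S" by (rule imageI)
    with r(3) show False by simp
  qed
  ultimately show thesis using that by blast
qed

lemma gate_reachable_move_along_edge:
  assumes "3 \<le> N" and "i < N" and "S \<subseteq> bitstrings N" and "2 * card S < 2 ^ N"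
    and "x \<in> S" and "flip i x \<notin> S"
  shows "gate_reachable N S (insert (flip i x) (S - {x}))"
proof -
  obtain r where r: "r \<in> bitstrings N" "r \<notin> S" "flip i r \<notin> S"
    using exists_edge_avoiding[OF assms(3,4)] .
  have x: "x \<in> bitstrings N" using assms(3,5) by blast
  let ?g = "controlled_flip i (\<lambda>z. on_edge N i x z \<noteq> on_edge N i r z)"
  have "?g ` S = (\<lambda>z. if z = x then flip i x else z) ` S"
  proof (rule image_cong)
    fix z assume z: "z \<in> S"
    then have "z \<in> bitstrings N" using assms(3) by blast
    then have "on_edge N i x z \<longleftrightarrow> z = x" and "\<not> on_edge N i r z"
      using z assms(6) r(2,3) on_edge_iff[OF x _ assms(2)] on_edge_iff[OF r(1) _ assms(2)]
      by auto
    then show "?g z = (if z = x then flip i x else z)" by (simp add: controlled_flip_def)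
  qed simp
  also have "\<dots> = insert (flip i x) (S - {x})" using assms(5) by auto
  finally show ?thesis
    using gate_reachable_image[OF edge_swap_realizable[OF assms(1,2) x r(1)] assms(3)] by simp
qed

lemma card_insert_Diff_swap:
  "finite S \<Longrightarrow> x \<in> S \<Longrightarrow> y \<notin> S \<Longrightarrow> card (insert y (S - {x})) = card S"
  by (metis Diff_iff card.insert_remove card_insert_disjoint finite_Diff insert_absorb)

lemma gate_reachable_exchange_via_neighbour:
  assumes "3 \<le> N" and "k < N" and "S \<subseteq> bitstrings N" and "2 * card S < 2 ^ N"
    and "v \<in> S" and "y \<in> bitstrings N" and "y \<notin> S"
    and IH: "\<And>T. T \<subseteq> bitstrings N \<Longrightarrow> 2 * card T < 2 ^ N \<Longrightarrow>
      flip k v \<in> T \<Longrightarrow> y \<notin> T \<Longrightarrow> gate_reachable N T (insert y (T - {flip k v}))"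
  shows "gate_reachable N S (insert y (S - {v}))"
proof -
  let ?p = "flip k v"
  have "finite S" using finite_subset[OF assms(3)] by simp
  have "?p ! k \<noteq> v ! k" using assms(2,3,5) by (auto simp: nth_flip bitstrings_def)
  then have "?p \<noteq> v" by auto
  show ?thesis
  proof (cases "?p \<in> S")
    case True
    let ?S' = "insert y (S - {?p})"
    have "card ?S' = card S" using \<open>finite S\<close> True assms(7) by (rule card_insert_Diff_swap)
    have "gate_reachable N S ?S'" using IH[OF assms(3,4) True assms(7)] .
    moreover have "gate_reachable N ?S' (insert ?p (?S' - {v}))"
    proof (rule gate_reachable_move_along_edge[OF assms(1,2)])
      show "?S' \<subseteq> bitstrings N" using assms(3,6) by blast
      show "2 * card ?S' < 2 ^ N" using assms(4) \<open>card ?S' = card S\<close> by simp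
      show "v \<in> ?S'" using assms(5) \<open>?p \<noteq> v\<close> by auto
      show "?p \<notin> ?S'" using True assms(7) by blast
    qed
    moreover have "insert ?p (?S' - {v}) = insert y (S - {v})"
      using True \<open>?p \<noteq> v\<close> assms(5,7) by auto
    ultimately show ?thesis using gate_reachable_trans by metis
  next
    case False
    let ?S' = "insert ?p (S - {v})"
    have "card ?S' = card S" using \<open>finite S\<close> assms(5) False by (rule card_insert_Diff_swap)
    have "gate_reachable N S ?S'"
      using gate_reachable_move_along_edge[OF assms(1-5) False] .
    moreover have "gate_reachable N ?S' (insert y (S - {v}))"
    proof (cases "?p = y")
      case True
      then show ?thesis by (simp add: gate_reachable_refl)
    next
      case False
      have "?S' \<subseteq> bitstrings N" using assms(3,5) by auto
      moreover have "2 * card ?S' < 2 ^ N" using assms(4) \<open>card ?S' = card S\<close> by simp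
      moreover have "?p \<in> ?S'" by simp
      moreover have "y \<notin> ?S'" using False assms(7) by blast
      ultimately have "gate_reachable N ?S' (insert y (?S' - {?p}))" by (rule IH)
      moreover have "?S' - {?p} = S - {v}" using \<open>?p \<notin> S\<close> by blast
      ultimately show ?thesis by simp
    qed
    ultimately show ?thesis using gate_reachable_trans by metis
  qed
qed

lemma gate_reachable_exchange:
  assumes "3 \<le> N" and "S \<subseteq> bitstrings N" and "2 * card S < 2 ^ N"
    and "x \<in> S" and "y \<in> bitstrings N" and "y \<notin> S"
  shows "gate_reachable N S (insert y (S - {x}))"
proof -
  let ?P = "\<lambda>v. \<forall>S. S \<subseteq> bitstrings N \<longrightarrow> 2 * card S < 2 ^ N \<longrightarrow> v \<in> S \<longrightarrow> y \<notin> S \<longrightarrow>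
    gate_reachable N S (insert y (S - {v}))"
  have x: "length x = N" using assms(2,4) by (auto simp: bitstrings_def)
  have "?P x"
  proof (rule flip_path_induct[where P = ?P and A = "{..<N}" and u = x and w = y])
    show "{..<N} \<subseteq> {..<length x}" using x by simp
  next
    fix v assume "length v = length x" "\<forall>k\<in>{..<N}. v ! k = y ! k"
    then have "v = y" using assms(5) x by (intro nth_equalityI) (auto simp: bitstrings_def)
    then show "?P v" by simp
  next
    fix v k assume "k \<in> {..<N}" and IH: "?P (flip k v)"
    then have "k < N" by simp
    show "?P v"
    proof (intro allI impI)
      fix S assume S: "S \<subseteq> bitstrings N" "2 * card S < 2 ^ N" "v \<in> S" "y \<notin> S"
      show "gate_reachable N S (insert y (S - {v}))"
        by (rule gate_reachable_exchange_via_neighbour[OF assms(1) \<open>k < N\<close> S(1-3) assms(5) S(4)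
              IH[rule_format]])
    qed
  qed
  then show ?thesis using assms(2-6) by simp
qed

lemma gate_reachable_if_card_eq:
  assumes "3 \<le> N" and "S \<subseteq> bitstrings N" and "T \<subseteq> bitstrings N"
    and "card S = card T" and "2 * card T < 2 ^ N"
  shows "gate_reachable N S T"
  using assms(2,4)
proof (induction "card (S - T)" arbitrary: S)
  case 0
  have "finite S" "finite T"
    using finite_subset[OF "0.prems"(1)] finite_subset[OF assms(3)] by simp_all
  with 0 have "S = T" by (metis Diff_eq_empty_iff card_0_eq card_subset_eq finite_Diff)
  then show ?case by (simp add: gate_reachable_refl)
next
  case (Suc n)
  have "finite S" "finite T"
    using finite_subset[OF Suc.prems(1)] finite_subset[OF assms(3)] by simp_all
  have "S - T \<noteq> {}" using Suc.hyps(2) by (intro notI) simp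
  then obtain x where x: "x \<in> S" "x \<notin> T" by blast
  have "\<not> T \<subseteq> S"
  proof
    assume "T \<subseteq> S"
    then have "T = S" using card_subset_eq[OF \<open>finite S\<close>] Suc.prems(2) by simp
    with x show False by blast
  qed
  then obtain y where y: "y \<in> T" "y \<notin> S" by blast
  let ?S' = "insert y (S - {x})"
  have "gate_reachable N S ?S'"
    using gate_reachable_exchange[OF assms(1) Suc.prems(1) _ x(1) _ y(2)] y(1) assms(3,5)
      Suc.prems(2) by auto
  moreover have "gate_reachable N ?S' T"
  proof (rule Suc.hyps(1))
    show "n = card (?S' - T)"
      using Suc.hyps(2) x y \<open>finite S\<close> by (simp add: Diff_insert2[symmetric])
    show "?S' \<subseteq> bitstrings N" using Suc.prems(1) y(1) assms(3) by auto
    show "card ?S' = card T"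
      using card_insert_Diff_swap[OF \<open>finite S\<close> x(1) y(2)] Suc.prems(2) by simp
  qed
  ultimately show ?case by (rule gate_reachable_trans)
qed

lemma apply_gates_replicate_fixed: "u ` T = T \<Longrightarrow> apply_gates (replicate n u) T = T"
  by (induction n) (simp_all add: apply_gates_def)

lemma all_large_lengths_via_fixed_set:
  assumes "gate_reachable N S T" and "gate_reachable N T S'"
    and "u \<in> gate_set N" and "u ` T = T"
  shows "\<exists>lmin. \<forall>l \<ge> lmin. \<exists>us. length us = l \<and> set us \<subseteq> gate_set N \<and> apply_gates us S = S'"
proof -
  obtain us1 us2 where us: "set us1 \<subseteq> gate_set N" "apply_gates us1 S = T"
    "set us2 \<subseteq> gate_set N" "apply_gates us2 T = S'"
    using assms(1,2) unfolding gate_reachable_def by blast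
  have "\<exists>us. length us = l \<and> set us \<subseteq> gate_set N \<and> apply_gates us S = S'"
    if "length us1 + length us2 \<le> l" for l
    using that us assms(3) apply_gates_replicate_fixed[OF assms(4)]
    by (intro exI[of _ "us1 @ replicate (l - (length us1 + length us2)) u @ us2"])
      (auto simp: apply_gates_append)
  then show ?thesis by blast
qed

lemma exists_gate_fixing_subset:
  assumes "3 \<le> N" and "2 * m \<le> 2 ^ N"
  obtains u T where "u \<in> gate_set N" "T \<subseteq> bitstrings N" "card T = m" "u ` T = T"
proof -
  let ?Z = "(#) False ` bitstrings (N - 1)"
  have "2 ^ N = 2 * (2::nat) ^ (N - 1)" using assms(1) by (cases N) simp_all
  then have "m \<le> card ?Z" using assms(2) by (simp add: card_image card_bitstrings)
  then obtain T where T: "T \<subseteq> ?Z" "card T = m" by (meson obtain_subset_with_card_n)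
  have "(1 + N - 1) mod N = 0" using assms(1) by simp
  then have "gate N 1 True True z = z" if "z \<in> T" for z using that T(1) by (auto simp: gate_def)
  then have "gate N 1 True True ` T = T" by simp
  moreover have "gate N 1 True True \<in> gate_set N"
    unfolding gate_set_def using assms(1) by (intro CollectI exI[of _ 1] exI[of _ True]) simp
  moreover have "T \<subseteq> bitstrings N" using T(1) assms(1) by (auto simp: bitstrings_def)
  ultimately show thesis using T(2) by (intro that)
qed

theorem lemma4:
  fixes N m :: nat
  assumes "N \<ge> 3" and "1 \<le> m" and "4 * m \<le> 2 ^ N"
  shows "\<forall>S \<in> Sigma_m N m. \<forall>S' \<in> Sigma_m N m. \<exists>lmin. \<forall>l \<ge> lmin.
           \<exists>us. length us = l \<and> set us \<subseteq> gate_set N \<and> apply_gates us S = S'"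
proof (intro ballI)
  fix S S' assume "S \<in> Sigma_m N m" "S' \<in> Sigma_m N m"
  then have S: "S \<subseteq> bitstrings N" "card S = m" and S': "S' \<subseteq> bitstrings N" "card S' = m"
    by (auto simp: Sigma_m_def)
  have "2 * m \<le> 2 ^ N" using assms(3) by simp
  then obtain u T where T: "u \<in> gate_set N" "T \<subseteq> bitstrings N" "card T = m" "u ` T = T"
    by (rule exists_gate_fixing_subset[OF assms(1)])
  have "2 * card T < 2 ^ N" using T(3) assms(2,3) by simp
  then have "gate_reachable N S T" "gate_reachable N T S'"
    using gate_reachable_if_card_eq[OF assms(1)] S S' T(2,3) by simp_all
  then show "\<exists>lmin. \<forall>l \<ge> lmin. \<exists>us. length us = l \<and> set us \<subseteq> gate_set N \<and> apply_gates us S = S'"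
    using T(1,4) by (rule all_large_lengths_via_fixed_set)
qed

end
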